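(* Let $E$ be an $S$-scaled vector space and $u$ a $1$-bounded $\tau$-morphism $E\to E$. If $3N_s^1(u)<s$ for every $s\le\tau$, then the series $e^u:=\sum_{j\ge0}u^j/j!$ converges to a morphism of $E$, and more precisely $$|e^u x|_{\lambda s}\le\sum_{j\ge0}\frac{(3N_s^1(u))^j}{(1-\lambda)^j s^j}|x|_s=\frac{1}{1-\frac{3N_s^1(u)}{(1-\lambda)s}}|x|_s$$ for all $s\in]0,\tau]$, all $\lambda\in]0,1-\frac{3N_s^1(u)}{s}[$ and all $x\in E_s$.
   Context: An $S$-scale of Banach spaces is a decreasing family $(E_s)_{s\in]0,S[}$ of Banach spaces with norms $|\cdot|_s$, the inclusions $E_{s+\sigma}\subset E_s$ having norm at most $1$; an $S$-scaled vector space is $E=\bigcup_sE_s$ with the direct-limit topology. A morphism $E\to E$ is a linear map such that for each $s$ there is $s'$ with $E_s$ mapped continuously into $E_{s'}$. A linear map $u$ is a $\tau$-morphism if for all $s'\in]0,\tau]$, $s\in]0,s'[$, $u(E_{s'})\subset E_s$ continuously; it is $1$-bounded if there is $C$ with $|u(x)|_s\le C\sigma^{-1}|x|_{s+\sigma}$ for all $s\in]0,\tau[$, $\sigma\in]0,\tau-s]$, $x\in E_{s+\sigma}$, and $N_\tau^1(u)$ is the smallest such $C$. For $s\le\tau$, $N_s^1(u)$ is the same constant with $\tau$ replaced by $s$. *)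

theory Defs
  imports "HOL-Analysis.Analysis"
begin

text \<open>An S-scale of Banach spaces, modelled inside an ambient real vector space 'a:
  E s is the carrier of the s-th space, nrm s its norm.\<close>

definition banach_on :: "'a::real_vector set \<Rightarrow> ('a \<Rightarrow> real) \<Rightarrow> bool" where
  "banach_on X n \<longleftrightarrow>
     0 \<in> X \<and> (\<forall>x\<in>X. \<forall>y\<in>X. x + y \<in> X) \<and> (\<forall>c. \<forall>x\<in>X. c *\<^sub>R x \<in> X) \<and>
     (\<forall>x\<in>X. n x \<ge> 0 \<and> (n x = 0 \<longleftrightarrow> x = 0)) \<and>
     (\<forall>x\<in>X. \<forall>y\<in>X. n (x + y) \<le> n x + n y) \<and>
     (\<forall>c. \<forall>x\<in>X. n (c *\<^sub>R x) = \<bar>c\<bar> * n x) \<and>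
     (\<forall>f::nat \<Rightarrow> 'a. (\<forall>k. f k \<in> X) \<longrightarrow>
        (\<forall>e>0. \<exists>M. \<forall>k\<ge>M. \<forall>l\<ge>M. n (f k - f l) < e) \<longrightarrow>
        (\<exists>y\<in>X. (\<lambda>k. n (f k - y)) \<longlonglongrightarrow> 0))"

definition S_scale :: "real \<Rightarrow> (real \<Rightarrow> 'a::real_vector set) \<Rightarrow> (real \<Rightarrow> 'a \<Rightarrow> real) \<Rightarrow> bool" where
  "S_scale S E nrm \<longleftrightarrow> S > 0 \<and>
     (\<forall>s. 0 < s \<and> s < S \<longrightarrow> banach_on (E s) (nrm s)) \<and>
     (\<forall>s \<sigma>. 0 < s \<and> 0 < \<sigma> \<and> s + \<sigma> < S \<longrightarrow>
        E (s + \<sigma>) \<subseteq> E s \<and> (\<forall>x\<in>E (s + \<sigma>). nrm s x \<le> nrm (s + \<sigma>) x))"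

definition scaled_space :: "real \<Rightarrow> (real \<Rightarrow> 'a set) \<Rightarrow> 'a set" where
  "scaled_space S E = (\<Union>s\<in>{0<..<S}. E s)"

definition linear_on_space :: "real \<Rightarrow> (real \<Rightarrow> 'a::real_vector set) \<Rightarrow> ('a \<Rightarrow> 'a) \<Rightarrow> bool" where
  "linear_on_space S E u \<longleftrightarrow>
     u ` scaled_space S E \<subseteq> scaled_space S E \<and>
     (\<forall>x\<in>scaled_space S E. \<forall>y\<in>scaled_space S E. u (x + y) = u x + u y) \<and>
     (\<forall>c. \<forall>x\<in>scaled_space S E. u (c *\<^sub>R x) = c *\<^sub>R u x)"

definition maps_cont :: "(real \<Rightarrow> 'a::real_vector set) \<Rightarrow> (real \<Rightarrow> 'a \<Rightarrow> real) \<Rightarrow> ('a \<Rightarrow> 'a) \<Rightarrow> real \<Rightarrow> real \<Rightarrow> bool" where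
  "maps_cont E nrm u s' s \<longleftrightarrow>
     (\<forall>x\<in>E s'. u x \<in> E s) \<and> (\<exists>C. \<forall>x\<in>E s'. nrm s (u x) \<le> C * nrm s' x)"

definition morphism :: "real \<Rightarrow> (real \<Rightarrow> 'a::real_vector set) \<Rightarrow> (real \<Rightarrow> 'a \<Rightarrow> real) \<Rightarrow> ('a \<Rightarrow> 'a) \<Rightarrow> bool" where
  "morphism S E nrm u \<longleftrightarrow> linear_on_space S E u \<and>
     (\<forall>s. 0 < s \<and> s < S \<longrightarrow> (\<exists>s'. 0 < s' \<and> s' < S \<and> maps_cont E nrm u s s'))"

definition tau_morphism :: "real \<Rightarrow> (real \<Rightarrow> 'a::real_vector set) \<Rightarrow> (real \<Rightarrow> 'a \<Rightarrow> real) \<Rightarrow> real \<Rightarrow> ('a \<Rightarrow> 'a) \<Rightarrow> bool" where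
  "tau_morphism S E nrm \<tau> u \<longleftrightarrow> linear_on_space S E u \<and>
     (\<forall>s' s. 0 < s' \<and> s' \<le> \<tau> \<and> 0 < s \<and> s < s' \<longrightarrow> maps_cont E nrm u s' s)"

definition one_bound_consts :: "(real \<Rightarrow> 'a::real_vector set) \<Rightarrow> (real \<Rightarrow> 'a \<Rightarrow> real) \<Rightarrow> real \<Rightarrow> ('a::real_vector \<Rightarrow> 'a) \<Rightarrow> real set" where
  "one_bound_consts E nrm t u = {C. C \<ge> 0 \<and>
     (\<forall>s \<sigma>. 0 < s \<and> s < t \<and> 0 < \<sigma> \<and> \<sigma> \<le> t - s \<longrightarrow>
        (\<forall>x\<in>E (s + \<sigma>). nrm s (u x) \<le> C / \<sigma> * nrm (s + \<sigma>) x))}"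

definition one_bounded :: "(real \<Rightarrow> 'a::real_vector set) \<Rightarrow> (real \<Rightarrow> 'a \<Rightarrow> real) \<Rightarrow> real \<Rightarrow> ('a::real_vector \<Rightarrow> 'a) \<Rightarrow> bool" where
  "one_bounded E nrm t u \<longleftrightarrow> one_bound_consts E nrm t u \<noteq> {}"

definition N1 :: "(real \<Rightarrow> 'a::real_vector set) \<Rightarrow> (real \<Rightarrow> 'a \<Rightarrow> real) \<Rightarrow> real \<Rightarrow> ('a::real_vector \<Rightarrow> 'a) \<Rightarrow> real" where
  "N1 E nrm t u = Inf (one_bound_consts E nrm t u)"

end

theory Submission
  imports Defs
begin

text \<open>Nagumo's argument: to estimate \<open>u\<^sup>j\<close> from \<open>E s\<close> into \<open>E (\<lambda> s)\<close>, split the gap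
  \<open>(1 - \<lambda>) s\<close> into \<open>j\<close> steps of length \<open>\<sigma> = (1 - \<lambda>) s / j\<close>. Each application of \<open>u\<close>
  costs a factor \<open>N / \<sigma>\<close>, so the \<open>j\<close>-th term of the exponential series has norm at most
  \<open>(N / ((1 - \<lambda>) s))\<^sup>j j\<^sup>j / j!\<close> times \<open>|x|\<^sub>s\<close>, and \<open>j\<^sup>j / j! \<le> e\<^sup>j \<le> 3\<^sup>j\<close>. The series is thus
  dominated by a geometric series of ratio \<open>3 N / ((1 - \<lambda>) s) < 1\<close> and converges in the
  Banach space \<open>E (\<lambda> s)\<close>. As the norms increase along the scale, the limit does not depend
  on the level where it is taken, which makes \<open>e\<^sup>u\<close> a well-defined linear map.\<close>

lemma power_div_fact_le_exp:
  fixes x :: real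
  assumes "0 \<le> x"
  shows "x ^ n / fact n \<le> exp x"
proof -
  have exp: "(\<lambda>k. x ^ k /\<^sub>R fact k) sums exp x" by (rule exp_converges)
  have "x ^ n / fact n = (\<Sum>k\<in>{n}. x ^ k /\<^sub>R fact k)" by (simp add: divide_inverse mult.commute)
  also have "\<dots> \<le> exp x"
    using sum_le_suminf[OF sums_summable[OF exp], of "{n}"] sums_unique[OF exp] assms by simp
  finally show ?thesis .
qed

lemma self_power_div_fact_le: "real n ^ n / fact n \<le> 3 ^ n"
proof -
  have "real n ^ n / fact n \<le> exp (real n)" by (rule power_div_fact_le_exp) simp
  also have "\<dots> = exp 1 ^ n" using exp_of_nat_mult[of n 1] by simp
  also have "\<dots> \<le> 3 ^ n" by (rule power_mono[OF exp_le]) simp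
  finally show ?thesis .
qed

lemma le_mult_cInf:
  fixes a r :: real
  assumes "B \<noteq> {}" "0 \<le> r" "\<And>C. C \<in> B \<Longrightarrow> a \<le> C * r"
  shows "a \<le> Inf B * r"
proof (cases "r = 0")
  case True
  then show ?thesis using assms(1,3) by auto
next
  case False
  then have "a / r \<le> Inf B"
    using assms by (intro cInf_greatest) (auto simp: pos_divide_le_eq)
  then show ?thesis using False assms(2) by (simp add: pos_divide_le_eq)
qed

locale banach_subspace =
  fixes X :: "'a::real_vector set" and n :: "'a \<Rightarrow> real"
  assumes banach_on: "banach_on X n"
begin

lemma zero_mem: "0 \<in> X"
  and add_mem: "x \<in> X \<Longrightarrow> y \<in> X \<Longrightarrow> x + y \<in> X"
  and scaleR_mem: "x \<in> X \<Longrightarrow> c *\<^sub>R x \<in> X"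
  and norm_nonneg: "x \<in> X \<Longrightarrow> 0 \<le> n x"
  and norm_eq_zero: "x \<in> X \<Longrightarrow> n x = 0 \<longleftrightarrow> x = 0"
  and norm_triangle: "x \<in> X \<Longrightarrow> y \<in> X \<Longrightarrow> n (x + y) \<le> n x + n y"
  and norm_scaleR: "x \<in> X \<Longrightarrow> n (c *\<^sub>R x) = \<bar>c\<bar> * n x"
  and complete: "(\<And>k. f k \<in> X) \<Longrightarrow> \<forall>e>0. \<exists>M. \<forall>k\<ge>M. \<forall>l\<ge>M. n (f k - f l) < e \<Longrightarrow>
                   \<exists>y\<in>X. (\<lambda>k. n (f k - y)) \<longlonglongrightarrow> 0"
  using banach_on unfolding banach_on_def by (elim conjE; simp)+

lemma diff_mem: "x \<in> X \<Longrightarrow> y \<in> X \<Longrightarrow> x - y \<in> X"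
  using add_mem[of x "(-1) *\<^sub>R y"] scaleR_mem[of y "-1"] by simp

lemma norm_minus_commute: "x \<in> X \<Longrightarrow> y \<in> X \<Longrightarrow> n (x - y) = n (y - x)"
  using norm_scaleR[of "y - x" "-1"] diff_mem by simp

lemma norm_zero: "n 0 = 0"
  using norm_eq_zero zero_mem by blast

lemma sum_mem: "(\<And>j. j \<in> A \<Longrightarrow> f j \<in> X) \<Longrightarrow> sum f A \<in> X"
  by (induction A rule: infinite_finite_induct) (auto intro: zero_mem add_mem)

lemma norm_sum_le: "(\<And>j. j \<in> A \<Longrightarrow> f j \<in> X) \<Longrightarrow> n (sum f A) \<le> (\<Sum>j\<in>A. n (f j))"
proof (induction A rule: infinite_finite_induct)
  case (insert j A)
  then have "n (sum f (insert j A)) \<le> n (f j) + n (sum f A)"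
    using norm_triangle[of "f j" "sum f A"] sum_mem[of A f] by simp
  then show ?case using insert by simp
qed (auto simp: norm_zero)

lemma limit_unique:
  assumes "\<And>k. p k \<in> X" "y \<in> X" "z \<in> X"
    and "(\<lambda>k. n (p k - y)) \<longlonglongrightarrow> 0" "(\<lambda>k. n (p k - z)) \<longlonglongrightarrow> 0"
  shows "y = z"
proof -
  have "n (y - z) \<le> n (p k - y) + n (p k - z)" for k
    using norm_triangle[of "y - p k" "p k - z"] norm_minus_commute[of y "p k"] assms(1-3)
    by (simp add: diff_mem)
  moreover have "(\<lambda>k. n (p k - y) + n (p k - z)) \<longlonglongrightarrow> 0"
    using tendsto_add[OF assms(4,5)] by simp
  ultimately have "n (y - z) \<le> 0" by (intro LIMSEQ_le_const[of _ 0]) auto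
  then show ?thesis using norm_nonneg[of "y - z"] norm_eq_zero[of "y - z"] assms(2,3) diff_mem by simp
qed

lemma tendsto_add_mem:
  assumes "\<And>k. p k \<in> X" "\<And>k. q k \<in> X" "y \<in> X" "z \<in> X"
    and "(\<lambda>k. n (p k - y)) \<longlonglongrightarrow> 0" "(\<lambda>k. n (q k - z)) \<longlonglongrightarrow> 0"
  shows "(\<lambda>k. n ((p k + q k) - (y + z))) \<longlonglongrightarrow> 0"
proof (rule tendsto_sandwich[of "\<lambda>k. 0" _ _ "\<lambda>k. n (p k - y) + n (q k - z)"])
  have "0 \<le> n ((p k + q k) - (y + z)) \<and> n ((p k + q k) - (y + z)) \<le> n (p k - y) + n (q k - z)" for k
  proof -
    have eq: "(p k + q k) - (y + z) = (p k - y) + (q k - z)" by simp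
    have "p k - y \<in> X" "q k - z \<in> X" using assms(1-4) by (simp_all add: diff_mem)
    then show ?thesis unfolding eq using norm_triangle[of "p k - y" "q k - z"] norm_nonneg[of "p k - y + (q k - z)"]
      by (simp add: add_mem)
  qed
  then show "\<forall>\<^sub>F k in sequentially. 0 \<le> n ((p k + q k) - (y + z))"
    and "\<forall>\<^sub>F k in sequentially. n ((p k + q k) - (y + z)) \<le> n (p k - y) + n (q k - z)"
    by simp_all
  show "(\<lambda>k. n (p k - y) + n (q k - z)) \<longlonglongrightarrow> 0"
    using tendsto_add[OF assms(5,6)] by simp
qed simp

lemma tendsto_scaleR_mem:
  assumes "\<And>k. p k \<in> X" "y \<in> X" "(\<lambda>k. n (p k - y)) \<longlonglongrightarrow> 0"
  shows "(\<lambda>k. n (c *\<^sub>R p k - c *\<^sub>R y)) \<longlonglongrightarrow> 0"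
proof -
  have "n (c *\<^sub>R p k - c *\<^sub>R y) = \<bar>c\<bar> * n (p k - y)" for k
    using norm_scaleR[of "p k - y" c] assms(1,2) diff_mem by (simp add: scaleR_diff_right)
  then show ?thesis using tendsto_mult_right_zero[OF assms(3), of "\<bar>c\<bar>"] by simp
qed

lemma partial_sums_Cauchy:
  assumes v: "\<And>j. v j \<in> X" and T: "\<And>j. n (v j) \<le> T j" and "summable T"
  shows "\<forall>e>0. \<exists>M. \<forall>k\<ge>M. \<forall>l\<ge>M. n ((\<Sum>j<k. v j) - (\<Sum>j<l. v j)) < e"
proof (intro allI impI)
  fix e :: real assume "e > 0"
  define P where "P k = (\<Sum>j<k. v j)" for k
  have P: "P k \<in> X" for k unfolding P_def using v by (intro sum_mem)
  have P_diff: "n (P k - P l) \<le> sum T {l..<k}" if "l \<le> k" for k l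
  proof -
    have "P k - P l = sum v {l..<k}"
      unfolding P_def lessThan_atLeast0 using sum_diff_nat_ivl[of 0 l k v] that by simp
    then have "n (P k - P l) \<le> (\<Sum>j\<in>{l..<k}. n (v j))" using v by (simp add: norm_sum_le)
    also have "\<dots> \<le> sum T {l..<k}" using T by (rule sum_mono)
    finally show ?thesis .
  qed
  obtain M where M: "\<forall>l\<ge>M. \<forall>k. norm (sum T {l..<k}) < e"
    using \<open>summable T\<close> \<open>e > 0\<close> unfolding summable_Cauchy by blast
  have "n (P k - P l) < e" if "k \<ge> M" "l \<ge> M" for k l
  proof (cases "l \<le> k")
    case True
    have "\<bar>sum T {l..<k}\<bar> < e" using M that(2) by auto
    then show ?thesis using P_diff[OF True] by linarith
  next
    case False
    have "\<bar>sum T {k..<l}\<bar> < e" using M that(1) by auto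
    then show ?thesis using P_diff[of k l] False norm_minus_commute[OF P P] by simp
  qed
  then show "\<exists>M. \<forall>k\<ge>M. \<forall>l\<ge>M. n ((\<Sum>j<k. v j) - (\<Sum>j<l. v j)) < e" unfolding P_def by blast
qed

lemma comparison_test:
  assumes v: "\<And>j. v j \<in> X" and T: "\<And>j. n (v j) \<le> T j" and "summable T"
  shows "\<exists>y\<in>X. (\<lambda>k. n ((\<Sum>j<k. v j) - y)) \<longlonglongrightarrow> 0 \<and> n y \<le> suminf T"
proof -
  define P where "P k = (\<Sum>j<k. v j)" for k
  have P: "P k \<in> X" for k unfolding P_def using v by (intro sum_mem)
  obtain y where y: "y \<in> X" "(\<lambda>k. n (P k - y)) \<longlonglongrightarrow> 0"
    using complete[of P] P partial_sums_Cauchy[OF assms] unfolding P_def by blast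
  have "n y \<le> suminf T + n (P k - y)" for k
  proof -
    have "n y \<le> n (P k) + n (y - P k)" using norm_triangle[of "P k" "y - P k"] P y diff_mem by simp
    moreover have "n (P k) \<le> suminf T"
    proof -
      have "n (P k) \<le> (\<Sum>j<k. n (v j))" unfolding P_def using v by (intro norm_sum_le)
      also have "\<dots> \<le> sum T {..<k}" using T by (rule sum_mono)
      also have "\<dots> \<le> suminf T"
        using \<open>summable T\<close> norm_nonneg[OF v] T by (intro sum_le_suminf) (auto intro: order_trans)
      finally show ?thesis .
    qed
    ultimately show ?thesis using norm_minus_commute[of y "P k"] P y by simp
  qed
  then have "n y \<le> suminf T + 0"
    by (intro LIMSEQ_le_const[OF tendsto_add[OF tendsto_const y(2)]]) auto
  then show ?thesis using y unfolding P_def by auto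
qed

end

lemma mem_scaled_space: "x \<in> scaled_space S E \<longleftrightarrow> (\<exists>s. 0 < s \<and> s < S \<and> x \<in> E s)"
  unfolding scaled_space_def by auto

lemma linear_on_space_funpow:
  assumes "linear_on_space S E u"
  shows "linear_on_space S E (u ^^ j)"
proof (induction j)
  case 0
  show ?case unfolding linear_on_space_def by simp
next
  case (Suc j)
  then show ?case using assms unfolding linear_on_space_def by (auto simp: image_subset_iff)
qed

definition exp_partial_sum :: "('a::real_vector \<Rightarrow> 'a) \<Rightarrow> 'a \<Rightarrow> nat \<Rightarrow> 'a" where
  "exp_partial_sum u x k = (\<Sum>j<k. (u ^^ j) x /\<^sub>R fact j)"

lemma exp_partial_sum_add:
  assumes "linear_on_space S E u" "x \<in> scaled_space S E" "y \<in> scaled_space S E"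
  shows "exp_partial_sum u (x + y) = (\<lambda>k. exp_partial_sum u x k + exp_partial_sum u y k)"
  using linear_on_space_funpow[OF assms(1)] assms(2,3)
  unfolding exp_partial_sum_def linear_on_space_def by (simp add: fun_eq_iff scaleR_add_right sum.distrib)

lemma exp_partial_sum_scaleR:
  assumes "linear_on_space S E u" "x \<in> scaled_space S E"
  shows "exp_partial_sum u (c *\<^sub>R x) = (\<lambda>k. c *\<^sub>R exp_partial_sum u x k)"
  using linear_on_space_funpow[OF assms(1)] assms(2)
  unfolding exp_partial_sum_def linear_on_space_def by (simp add: fun_eq_iff scaleR_sum_right mult.commute)

lemma one_bound_consts_antimono: "t \<le> \<tau> \<Longrightarrow> one_bound_consts E nrm \<tau> u \<subseteq> one_bound_consts E nrm t u"
  unfolding one_bound_consts_def by auto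

locale S_scaled =
  fixes S :: real and E :: "real \<Rightarrow> 'a::real_vector set" and nrm :: "real \<Rightarrow> 'a \<Rightarrow> real"
  assumes S_scale: "S_scale S E nrm"
begin

lemma level_banach: "0 < s \<Longrightarrow> s < S \<Longrightarrow> banach_subspace (E s) (nrm s)"
  using S_scale unfolding S_scale_def by (simp add: banach_subspace_def)

lemma level_antimono:
  assumes "0 < a" "a \<le> b" "b < S"
  shows "E b \<subseteq> E a" and "x \<in> E b \<Longrightarrow> nrm a x \<le> nrm b x"
proof -
  have "E b \<subseteq> E a \<and> (\<forall>x\<in>E b. nrm a x \<le> nrm b x)"
  proof (cases "a = b")
    case False
    then show ?thesis
      using S_scale[unfolded S_scale_def, THEN conjunct2, THEN conjunct2, rule_format, of a "b - a"] assms
      by simp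
  qed simp
  then show "E b \<subseteq> E a" and "x \<in> E b \<Longrightarrow> nrm a x \<le> nrm b x" by auto
qed

definition converges_at :: "real \<Rightarrow> (nat \<Rightarrow> 'a) \<Rightarrow> 'a \<Rightarrow> bool" where
  "converges_at a p y \<longleftrightarrow>
     0 < a \<and> a < S \<and> y \<in> E a \<and> (\<forall>k. p k \<in> E a) \<and> (\<lambda>k. nrm a (p k - y)) \<longlonglongrightarrow> 0"

lemma converges_at_antimono:
  assumes conv: "converges_at b p y" and a: "0 < a" "a \<le> b"
  shows "converges_at a p y"
proof -
  have b: "0 < b" "b < S" and y: "y \<in> E b" and p: "\<And>k. p k \<in> E b"
    and lim: "(\<lambda>k. nrm b (p k - y)) \<longlonglongrightarrow> 0"
    using conv a unfolding converges_at_def by auto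
  interpret Eb: banach_subspace "E b" "nrm b" using level_banach[OF b] .
  interpret Ea: banach_subspace "E a" "nrm a" using level_banach a b by simp
  have sub: "E b \<subseteq> E a" and le: "\<And>x. x \<in> E b \<Longrightarrow> nrm a x \<le> nrm b x"
    using level_antimono[OF a b(2)] by auto
  have "(\<lambda>k. nrm a (p k - y)) \<longlonglongrightarrow> 0"
  proof (rule tendsto_sandwich[OF _ _ tendsto_const lim])
    have "p k - y \<in> E b" for k using p y by (rule Eb.diff_mem)
    then show "\<forall>\<^sub>F k in sequentially. 0 \<le> nrm a (p k - y)"
      and "\<forall>\<^sub>F k in sequentially. nrm a (p k - y) \<le> nrm b (p k - y)"
      using sub by (auto intro!: always_eventually Ea.norm_nonneg le)
  qed
  then show ?thesis using a b sub p y unfolding converges_at_def by auto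
qed

lemma converges_at_unique:
  assumes "converges_at a p y" "converges_at b p z"
  shows "y = z"
proof -
  have "y = z" if "converges_at a p y" "converges_at b p z" "a \<le> b" for a b y z
  proof -
    have "0 < a" using that(1) unfolding converges_at_def by simp
    then have "converges_at a p z" using converges_at_antimono that(2,3) by blast
    then show ?thesis using that(1) banach_subspace.limit_unique[OF level_banach, of a p y z]
      unfolding converges_at_def by blast
  qed
  then show ?thesis using assms by (metis linear)
qed

lemma converges_at_add:
  assumes "converges_at a p y" "converges_at a q z"
  shows "converges_at a (\<lambda>k. p k + q k) (y + z)"
  using assms banach_subspace.add_mem[OF level_banach] banach_subspace.tendsto_add_mem[OF level_banach]
  unfolding converges_at_def by auto

lemma converges_at_scaleR:
  assumes "converges_at a p y"
  shows "converges_at a (\<lambda>k. c *\<^sub>R p k) (c *\<^sub>R y)"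
  using assms banach_subspace.scaleR_mem[OF level_banach] banach_subspace.tendsto_scaleR_mem[OF level_banach]
  unfolding converges_at_def by auto

end

locale one_bounded_tau_morphism = S_scaled +
  fixes \<tau> :: real and u :: "'a \<Rightarrow> 'a"
  assumes tau_pos: "0 < \<tau>" and tau_less: "\<tau> < S"
    and tau_morphism: "tau_morphism S E nrm \<tau> u"
    and one_bounded: "one_bounded E nrm \<tau> u"
begin

lemma one_bound_consts_nonempty: "t \<le> \<tau> \<Longrightarrow> one_bound_consts E nrm t u \<noteq> {}"
  using one_bounded one_bound_consts_antimono unfolding one_bounded_def by blast

lemma N1_nonneg: "t \<le> \<tau> \<Longrightarrow> 0 \<le> N1 E nrm t u"
  unfolding N1_def using one_bound_consts_nonempty
  by (intro cInf_greatest) (auto simp: one_bound_consts_def)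

lemma N1_bound:
  assumes "0 < s" "0 < \<sigma>" "s + \<sigma> \<le> t" "t \<le> \<tau>" "x \<in> E (s + \<sigma>)"
  shows "nrm s (u x) \<le> N1 E nrm t u / \<sigma> * nrm (s + \<sigma>) x"
proof -
  have "nrm s (u x) \<le> N1 E nrm t u * (nrm (s + \<sigma>) x / \<sigma>)"
    unfolding N1_def
  proof (rule le_mult_cInf)
    show "one_bound_consts E nrm t u \<noteq> {}" using one_bound_consts_nonempty[OF assms(4)] .
    show "0 \<le> nrm (s + \<sigma>) x / \<sigma>"
      using banach_subspace.norm_nonneg[OF level_banach] assms tau_less by simp
    fix C assume "C \<in> one_bound_consts E nrm t u"
    then show "nrm s (u x) \<le> C * (nrm (s + \<sigma>) x / \<sigma>)"
      using assms unfolding one_bound_consts_def by auto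
  qed
  then show ?thesis by simp
qed

lemma admissible_lam_less_1:
  assumes "0 < s" "s \<le> \<tau>" "lam < 1 - 3 * N1 E nrm s u / s"
  shows "lam < 1"
proof -
  have "0 \<le> 3 * N1 E nrm s u / s" using N1_nonneg[OF assms(2)] assms(1) by simp
  then show ?thesis using assms(3) by linarith
qed

lemma linear_u: "linear_on_space S E u"
  using tau_morphism unfolding tau_morphism_def by blast

lemma u_maps_level: "0 < s \<Longrightarrow> s < s' \<Longrightarrow> s' \<le> \<tau> \<Longrightarrow> x \<in> E s' \<Longrightarrow> u x \<in> E s"
  using tau_morphism unfolding tau_morphism_def maps_cont_def by (meson order_less_trans)

lemma funpow_bound:
  assumes "0 < b" "0 < \<sigma>" "b + real j * \<sigma> \<le> t" "t \<le> \<tau>" "x \<in> E (b + real j * \<sigma>)"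
  shows "(u ^^ j) x \<in> E b \<and> nrm b ((u ^^ j) x) \<le> (N1 E nrm t u / \<sigma>) ^ j * nrm (b + real j * \<sigma>) x"
  using assms
proof (induction j arbitrary: b)
  case (Suc j)
  have shift: "b + \<sigma> + real j * \<sigma> = b + real (Suc j) * \<sigma>" by (simp add: algebra_simps)
  have "\<sigma> \<le> real (Suc j) * \<sigma>" using Suc.prems(2) by simp
  then have step: "b + \<sigma> \<le> t" using Suc.prems(3) by linarith
  have IH: "(u ^^ j) x \<in> E (b + \<sigma>)"
    "nrm (b + \<sigma>) ((u ^^ j) x) \<le> (N1 E nrm t u / \<sigma>) ^ j * nrm (b + real (Suc j) * \<sigma>) x"
    using Suc.IH[of "b + \<sigma>"] Suc.prems unfolding shift by auto
  have "nrm b ((u ^^ Suc j) x) \<le> N1 E nrm t u / \<sigma> * nrm (b + \<sigma>) ((u ^^ j) x)"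
    using N1_bound[OF Suc.prems(1,2) step Suc.prems(4) IH(1)] by simp
  also have "\<dots> \<le> N1 E nrm t u / \<sigma> * ((N1 E nrm t u / \<sigma>) ^ j * nrm (b + real (Suc j) * \<sigma>) x)"
    using IH(2) N1_nonneg[OF Suc.prems(4)] Suc.prems(2) by (intro mult_left_mono) auto
  finally show ?case
    using u_maps_level[OF Suc.prems(1) _ _ IH(1)] step Suc.prems(2,4) by simp
qed simp

lemma exp_term_bound:
  assumes s: "0 < s" "s \<le> \<tau>" and lam: "0 < lam" "lam < 1" and x: "x \<in> E s"
  shows "(u ^^ j) x \<in> E (lam * s)"
    and "nrm (lam * s) ((u ^^ j) x /\<^sub>R fact j)
           \<le> (3 * N1 E nrm s u) ^ j / ((1 - lam) ^ j * s ^ j) * nrm s x"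
proof -
  define N where "N = N1 E nrm s u"
  have N0: "0 \<le> N" unfolding N_def using N1_nonneg[OF s(2)] .
  have ls: "0 < lam * s" "lam * s \<le> s" "s < S" using s lam tau_less by auto
  interpret El: banach_subspace "E (lam * s)" "nrm (lam * s)" using level_banach ls by simp
  have "(u ^^ j) x \<in> E (lam * s) \<and> nrm (lam * s) ((u ^^ j) x) / fact j \<le> (3 * N) ^ j / ((1 - lam) ^ j * s ^ j) * nrm s x"
  proof (cases "j = 0")
    case True
    then show ?thesis using level_antimono[OF ls] x unfolding N_def by auto
  next
    case False
    define \<sigma> where "\<sigma> = (1 - lam) * s / real j"
    have \<sigma>: "0 < \<sigma>" "lam * s + real j * \<sigma> = s" unfolding \<sigma>_def using False lam s by (auto simp: field_simps)
    define A where "A = N / ((1 - lam) * s)"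
    have A0: "0 \<le> A" unfolding A_def using N0 lam s by simp
    have "N / \<sigma> = A * real j" unfolding A_def \<sigma>_def using False lam s by (simp add: field_simps)
    moreover have "0 \<le> nrm s x" using banach_subspace.norm_nonneg[OF level_banach] s ls x by simp
    moreover note funpow_bound[of "lam * s" \<sigma> j s x] \<sigma> ls s x
    ultimately have "(u ^^ j) x \<in> E (lam * s)"
      and "nrm (lam * s) ((u ^^ j) x) / fact j \<le> A ^ j * (real j ^ j / fact j) * nrm s x"
      unfolding N_def by (auto simp: power_mult_distrib divide_right_mono)
    moreover have "A ^ j * (real j ^ j / fact j) * nrm s x \<le> A ^ j * 3 ^ j * nrm s x"
      using self_power_div_fact_le[of j] A0 \<open>0 \<le> nrm s x\<close> by (intro mult_right_mono mult_left_mono) auto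
    moreover have "A ^ j * 3 ^ j = (3 * N) ^ j / ((1 - lam) ^ j * s ^ j)"
      unfolding A_def by (simp add: power_divide power_mult_distrib)
    ultimately show ?thesis by simp
  qed
  moreover have "nrm (lam * s) ((u ^^ j) x /\<^sub>R fact j) = nrm (lam * s) ((u ^^ j) x) / fact j"
    if "(u ^^ j) x \<in> E (lam * s)"
    using El.norm_scaleR[OF that, of "inverse (fact j)"] by (simp add: divide_inverse mult.commute)
  ultimately show "(u ^^ j) x \<in> E (lam * s)"
    and "nrm (lam * s) ((u ^^ j) x /\<^sub>R fact j) \<le> (3 * N1 E nrm s u) ^ j / ((1 - lam) ^ j * s ^ j) * nrm s x"
    unfolding N_def by auto
qed

definition exp_op :: "'a \<Rightarrow> 'a" where
  "exp_op x = (SOME y. \<exists>a. converges_at a (exp_partial_sum u x) y)"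

lemma exp_op_eq: "converges_at a (exp_partial_sum u x) y \<Longrightarrow> exp_op x = y"
  unfolding exp_op_def by (rule some_equality) (auto dest: converges_at_unique)

lemma exp_op_estimate:
  assumes s: "0 < s" "s \<le> \<tau>" and lam: "0 < lam" "lam < 1 - 3 * N1 E nrm s u / s" and x: "x \<in> E s"
  defines "q \<equiv> 3 * N1 E nrm s u / ((1 - lam) * s)"
  shows "converges_at (lam * s) (exp_partial_sum u x) (exp_op x)"
    and "(\<lambda>j. (3 * N1 E nrm s u) ^ j / ((1 - lam) ^ j * s ^ j) * nrm s x) sums (1 / (1 - q) * nrm s x)"
    and "nrm (lam * s) (exp_op x) \<le> 1 / (1 - q) * nrm s x"
proof -
  define T where "T j = (3 * N1 E nrm s u) ^ j / ((1 - lam) ^ j * s ^ j) * nrm s x" for j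
  have N0: "0 \<le> N1 E nrm s u" using N1_nonneg[OF s(2)] .
  have lam1: "lam < 1" using admissible_lam_less_1[OF s lam(2)] .
  have "lam * s < s" using s lam1 by simp
  then have ls: "0 < lam * s" "lam * s < S" using s lam tau_less by (simp, linarith)
  interpret El: banach_subspace "E (lam * s)" "nrm (lam * s)" using level_banach ls by simp
  have q: "0 \<le> q" "q < 1" unfolding q_def using N0 lam lam1 s by (auto simp: field_simps)
  have "T = (\<lambda>j. q ^ j * nrm s x)"
    unfolding T_def q_def by (simp add: fun_eq_iff power_divide power_mult_distrib)
  then show sums: "T sums (1 / (1 - q) * nrm s x)"
    using sums_mult2[OF geometric_sums[of q], of "nrm s x"] q by simp
  have "\<exists>y\<in>E (lam * s). (\<lambda>k. nrm (lam * s) ((\<Sum>j<k. (u ^^ j) x /\<^sub>R fact j) - y)) \<longlonglongrightarrow> 0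
          \<and> nrm (lam * s) y \<le> suminf T"
    using exp_term_bound[OF s lam(1) lam1 x] sums_summable[OF sums] unfolding T_def
    by (intro El.comparison_test El.scaleR_mem)
  then obtain y where y: "y \<in> E (lam * s)"
    "(\<lambda>k. nrm (lam * s) ((\<Sum>j<k. (u ^^ j) x /\<^sub>R fact j) - y)) \<longlonglongrightarrow> 0"
    "nrm (lam * s) y \<le> suminf T"
    by blast
  have "converges_at (lam * s) (exp_partial_sum u x) y"
    unfolding converges_at_def exp_partial_sum_def
    using ls y exp_term_bound(1)[OF s lam(1) lam1 x] by (auto intro!: El.sum_mem El.scaleR_mem)
  with exp_op_eq show "converges_at (lam * s) (exp_partial_sum u x) (exp_op x)" by simp
  show "nrm (lam * s) (exp_op x) \<le> 1 / (1 - q) * nrm s x"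
    using y(3) sums_unique[OF sums] exp_op_eq[OF \<open>converges_at _ _ y\<close>] by simp
qed

lemma exp_op_series:
  assumes "0 < s" "s \<le> \<tau>" "0 < lam" "lam < 1 - 3 * N1 E nrm s u / s" "x \<in> E s"
  shows "(\<forall>j. (u ^^ j) x \<in> E (lam * s)) \<and> exp_op x \<in> E (lam * s) \<and>
        (\<lambda>n. nrm (lam * s) ((\<Sum>j<n. (u ^^ j) x /\<^sub>R fact j) - exp_op x)) \<longlonglongrightarrow> 0 \<and>
        summable (\<lambda>j. (3 * N1 E nrm s u) ^ j / ((1 - lam) ^ j * s ^ j) * nrm s x) \<and>
        nrm (lam * s) (exp_op x) \<le> (\<Sum>j. (3 * N1 E nrm s u) ^ j / ((1 - lam) ^ j * s ^ j) * nrm s x) \<and>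
        (\<Sum>j. (3 * N1 E nrm s u) ^ j / ((1 - lam) ^ j * s ^ j) * nrm s x)
          = 1 / (1 - 3 * N1 E nrm s u / ((1 - lam) * s)) * nrm s x"
proof -
  have "lam < 1" using admissible_lam_less_1[OF assms(1,2,4)] .
  note terms = exp_term_bound(1)[OF assms(1-3) this assms(5)]
  note conv = exp_op_estimate(1)[OF assms, unfolded converges_at_def exp_partial_sum_def]
  note sums = exp_op_estimate(2)[OF assms]
  show ?thesis
    using terms conv sums_summable[OF sums] sums_unique[OF sums] exp_op_estimate(3)[OF assms] by simp
qed

end

locale exponentiable = one_bounded_tau_morphism +
  assumes N1_small: "\<And>s. 0 < s \<Longrightarrow> s \<le> \<tau> \<Longrightarrow> 3 * N1 E nrm s u < s"
begin

lemma admissible_level: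
  assumes "0 < s0"
  obtains t lam where "0 < t" "t \<le> \<tau>" "t \<le> s0" "0 < lam" "lam < 1 - 3 * N1 E nrm t u / t"
proof -
  define t where "t = min s0 \<tau>"
  have t: "0 < t" "t \<le> \<tau>" "t \<le> s0" unfolding t_def using assms tau_pos by auto
  then have "3 * N1 E nrm t u / t < 1" using N1_small[OF t(1,2)] by simp
  then show ?thesis
    using that[OF t, of "(1 - 3 * N1 E nrm t u / t) / 2"] by simp
qed

lemma exp_op_converges:
  assumes "x \<in> scaled_space S E"
  obtains a where "converges_at a (exp_partial_sum u x) (exp_op x)"
proof -
  obtain s0 where s0: "0 < s0" "s0 < S" "x \<in> E s0" using assms unfolding mem_scaled_space by blast
  obtain t lam where t: "0 < t" "t \<le> \<tau>" "t \<le> s0" and lam: "0 < lam" "lam < 1 - 3 * N1 E nrm t u / t"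
    using admissible_level[OF s0(1)] .
  have "x \<in> E t" using level_antimono(1)[OF t(1,3) s0(2)] s0(3) by blast
  then show ?thesis using exp_op_estimate(1)[OF t(1,2) lam] that by blast
qed

lemma exp_op_add:
  assumes x: "x \<in> scaled_space S E" and y: "y \<in> scaled_space S E"
  shows "exp_op (x + y) = exp_op x + exp_op y"
proof -
  obtain a where a: "converges_at a (exp_partial_sum u x) (exp_op x)" using exp_op_converges[OF x] .
  obtain b where b: "converges_at b (exp_partial_sum u y) (exp_op y)" using exp_op_converges[OF y] .
  have "0 < min a b" using a b unfolding converges_at_def by simp
  then have "converges_at (min a b) (exp_partial_sum u x) (exp_op x)"
    and "converges_at (min a b) (exp_partial_sum u y) (exp_op y)"
    using converges_at_antimono[OF a] converges_at_antimono[OF b] by simp_all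
  then have "converges_at (min a b) (exp_partial_sum u (x + y)) (exp_op x + exp_op y)"
    unfolding exp_partial_sum_add[OF linear_u x y] by (rule converges_at_add)
  then show ?thesis by (rule exp_op_eq)
qed

lemma exp_op_scaleR:
  assumes x: "x \<in> scaled_space S E"
  shows "exp_op (c *\<^sub>R x) = c *\<^sub>R exp_op x"
proof -
  obtain a where "converges_at a (exp_partial_sum u x) (exp_op x)" using exp_op_converges[OF x] .
  then have "converges_at a (exp_partial_sum u (c *\<^sub>R x)) (c *\<^sub>R exp_op x)"
    unfolding exp_partial_sum_scaleR[OF linear_u x] by (rule converges_at_scaleR)
  then show ?thesis by (rule exp_op_eq)
qed

lemma exp_op_maps_cont:
  assumes s0: "0 < s0" "s0 < S"
  shows "\<exists>s'. 0 < s' \<and> s' < S \<and> maps_cont E nrm exp_op s0 s'"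
proof -
  obtain t lam where t: "0 < t" "t \<le> \<tau>" "t \<le> s0" and lam: "0 < lam" "lam < 1 - 3 * N1 E nrm t u / t"
    using admissible_level[OF s0(1)] .
  define K where "K = 1 / (1 - 3 * N1 E nrm t u / ((1 - lam) * t))"
  have "lam < 1" using admissible_lam_less_1[OF t(1,2) lam(2)] .
  then have "3 * N1 E nrm t u / ((1 - lam) * t) < 1" using lam t(1) by (simp add: field_simps)
  then have K0: "0 \<le> K" unfolding K_def by simp
  have "nrm (lam * t) (exp_op x) \<le> K * nrm s0 x" if x: "x \<in> E s0" for x
  proof -
    have "x \<in> E t" using level_antimono(1)[OF t(1,3) s0(2)] x by blast
    then have "nrm (lam * t) (exp_op x) \<le> K * nrm t x" unfolding K_def by (rule exp_op_estimate(3)[OF t(1,2) lam])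
    also have "\<dots> \<le> K * nrm s0 x" using level_antimono(2)[OF t(1,3) s0(2) x] K0 by (rule mult_left_mono)
    finally show ?thesis .
  qed
  moreover have "exp_op x \<in> E (lam * t)" if "x \<in> E s0" for x
    using exp_op_estimate(1)[OF t(1,2) lam] level_antimono(1)[OF t(1,3) s0(2)] that
    unfolding converges_at_def by blast
  ultimately have "maps_cont E nrm exp_op s0 (lam * t)" unfolding maps_cont_def by blast
  moreover have "lam * t < t" using \<open>lam < 1\<close> t(1) by simp
  then have "0 < lam * t" "lam * t < S" using lam(1) t(1,2) tau_less by (simp, linarith)
  ultimately show ?thesis by blast
qed

lemma exp_op_morphism: "morphism S E nrm exp_op"
proof -
  have "exp_op x \<in> scaled_space S E" if "x \<in> scaled_space S E" for x
    using exp_op_converges[OF that] unfolding converges_at_def mem_scaled_space by blast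
  then show ?thesis
    unfolding morphism_def linear_on_space_def
    using exp_op_add exp_op_scaleR exp_op_maps_cont by blast
qed

end

theorem mainTheorem5:
  fixes S \<tau> :: real and E :: "real \<Rightarrow> 'a::real_vector set" and nrm :: "real \<Rightarrow> 'a \<Rightarrow> real"
    and u :: "'a \<Rightarrow> 'a"
  assumes scale: "S_scale S E nrm"
    and tau: "0 < \<tau>" "\<tau> < S"
    and taumor: "tau_morphism S E nrm \<tau> u"
    and bdd: "one_bounded E nrm \<tau> u"
    and small: "\<And>s. 0 < s \<Longrightarrow> s \<le> \<tau> \<Longrightarrow> 3 * N1 E nrm s u < s"
  shows "\<exists>f. morphism S E nrm f \<and>
     (\<forall>s lam x. 0 < s \<and> s \<le> \<tau> \<and> 0 < lam \<and> lam < 1 - 3 * N1 E nrm s u / s \<and> x \<in> E s \<longrightarrow>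
        (\<forall>j. (u ^^ j) x \<in> E (lam * s)) \<and> f x \<in> E (lam * s) \<and>
        (\<lambda>n. nrm (lam * s) ((\<Sum>j<n. (u ^^ j) x /\<^sub>R fact j) - f x)) \<longlonglongrightarrow> 0 \<and>
        summable (\<lambda>j. (3 * N1 E nrm s u) ^ j / ((1 - lam) ^ j * s ^ j) * nrm s x) \<and>
        nrm (lam * s) (f x) \<le> (\<Sum>j. (3 * N1 E nrm s u) ^ j / ((1 - lam) ^ j * s ^ j) * nrm s x) \<and>
        (\<Sum>j. (3 * N1 E nrm s u) ^ j / ((1 - lam) ^ j * s ^ j) * nrm s x)
          = 1 / (1 - 3 * N1 E nrm s u / ((1 - lam) * s)) * nrm s x)"
proof -
  interpret exponentiable S E nrm \<tau> u
    using assms by unfold_locales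
  show ?thesis
    by (rule exI[of _ exp_op], rule conjI[OF exp_op_morphism], intro allI impI, elim conjE,
        rule exp_op_series)
qed

end
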